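(* Let $(G,\ell)$ be a group with an invariant $\Lambda$-valued pseudo-norm. Then $(G,\ell)$ is metrically LEF if and only if $G^{\square,\mathbb Q}$ has the finite model property for existential sentences with respect to $T_{IPMG}$. If $\ell$ is a norm, then $(G,\ell)$ is metrically LEF if and only if $G^{\square,\mathbb Q}$ has the finite model property for existential sentences with respect to $T_{IMG}$.
   Context: $\Lambda$ is a closed convex subset of $[0,\infty)$ containing $0$. A pseudo-norm on $G$ is $\ell:G\to\Lambda$ with $\ell(1)=0$, $\ell(g)=\ell(g^{-1})$, $\ell(gh)\le\ell(g)+\ell(h)$; a norm if $\ell(g)=0\Rightarrow g=1$; invariant if $\ell(h^{-1}gh)=\ell(g)$. $L^{\square,\mathbb Q}$ is the language of groups $(\cdot,{}^{-1},1)$ plus unary predicates $R^{\square\varepsilon}$, $\square\in\{<,>,=\}$, $\varepsilon\in\Lambda\cap\mathbb Q$; $G^{\square,\mathbb Q}$ is the group $G$ with $R^{\square\varepsilon}(g)$ interpreted as $\ell(g)\,\square\,\varepsilon$. $T_{IPMG}$ is the $L^{\square,\mathbb Q}$-theory whose models are the groups $M$ with predicates such that: for every $a\in M$ and $\varepsilon\in\Lambda\cap\mathbb Q$ exactly one of $R^{<\varepsilon}(a),R^{=\varepsilon}(a),R^{>\varepsilon}(a)$ holds (write $f(a,\varepsilon)$ for that symbol); for $q\le q'$ in $\Lambda\cap\mathbb Q$, $f(g,q)\in\{<,=\}\Rightarrow f(g,q')\in\{<,=\}$ and $f(g,q')\in\{>,=\}\Rightarrow f(g,q)\in\{>,=\}$;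 $f(1,0)$ is $=$ and $f(g,0)\in\{=,>\}$ for all $g$; $f(g,q)=f(g^{-1},q)$; if $f(g,q),f(g',q')\in\{<,=\}$ and $q+q'\in\Lambda$ then $f(gg',q+q')\in\{<,=\}$; and $f(hgh^{-1},q)=f(g,q)$. $T_{IMG}$ is $T_{IPMG}$ together with: $f(g,0)\in\{<,=\}\Rightarrow g=1$. A structure $M$ has the finite model property for existential sentences with respect to a theory $T$ if every existential $L^{\square,\mathbb Q}$-sentence true in $M$ is true in some finite model of $T$. $(G,\ell)$ is metrically LEF if for every finite $D\subseteq G$ and finite $Q\subseteq\Lambda\cap\mathbb Q$ with $0\in Q$ there are a finite group $C$ with invariant $\Lambda$-valued pseudo-norm $\ell_C$ and a map $\varphi:G\to C$ injective on $D$ with $\varphi(hg)=\varphi(h)\varphi(g)$ whenever $h,g,hg\in D$ and $\ell(g)\,\square\,q\iff\ell_C(\varphi(g))\,\square\,q$ for all $g\in D,q\in Q,\square$. *)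

theory Defs
  imports Complex_Main "HOL-Analysis.Convex" "HOL-Algebra.Group"
begin

definition inv_pseudo_norm :: "real set \<Rightarrow> ('a, 'b) monoid_scheme \<Rightarrow> ('a \<Rightarrow> real) \<Rightarrow> bool" where
  "inv_pseudo_norm Lam G l \<longleftrightarrow>
     (\<forall>g\<in>carrier G. l g \<in> Lam) \<and>
     l \<one>\<^bsub>G\<^esub> = 0 \<and>
     (\<forall>g\<in>carrier G. l g = l (inv\<^bsub>G\<^esub> g)) \<and>
     (\<forall>g\<in>carrier G. \<forall>h\<in>carrier G. l (g \<otimes>\<^bsub>G\<^esub> h) \<le> l g + l h) \<and>
     (\<forall>g\<in>carrier G. \<forall>h\<in>carrier G. l (inv\<^bsub>G\<^esub> h \<otimes>\<^bsub>G\<^esub> g \<otimes>\<^bsub>G\<^esub> h) = l g)"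

definition is_norm_on :: "('a, 'b) monoid_scheme \<Rightarrow> ('a \<Rightarrow> real) \<Rightarrow> bool" where
  "is_norm_on G l \<longleftrightarrow> (\<forall>g\<in>carrier G. l g = 0 \<longrightarrow> g = \<one>\<^bsub>G\<^esub>)"

datatype cmp = Lt | EqC | Gt

fun cmpr :: "cmp \<Rightarrow> real \<Rightarrow> real \<Rightarrow> bool" where
  "cmpr Lt x y = (x < y)"
| "cmpr EqC x y = (x = y)"
| "cmpr Gt x y = (x > y)"

datatype trm = Var nat | One | Mul trm trm | Inv trm

text \<open>Quantifier-free formulas; Rel c q t stands for the atom R^{c q}(t).\<close>
datatype qf = TT | FF | Eqt trm trm | Rel cmp rat trm | Neg qf | Conj qf qf | Disj qf qf

text \<open>Predicate symbols R^{c q} exist only for q in Lambda \<inter> Q.\<close>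
fun wf_qf :: "real set \<Rightarrow> qf \<Rightarrow> bool" where
  "wf_qf Lam TT = True"
| "wf_qf Lam FF = True"
| "wf_qf Lam (Eqt s t) = True"
| "wf_qf Lam (Rel c q t) = (of_rat q \<in> Lam)"
| "wf_qf Lam (Neg p) = wf_qf Lam p"
| "wf_qf Lam (Conj p r) = (wf_qf Lam p \<and> wf_qf Lam r)"
| "wf_qf Lam (Disj p r) = (wf_qf Lam p \<and> wf_qf Lam r)"

text \<open>An L-structure: a monoid-record G (group operations) and an interpretation
  P c q of the unary predicate R^{c q}.\<close>
fun eval_trm :: "('a, 'b) monoid_scheme \<Rightarrow> (nat \<Rightarrow> 'a) \<Rightarrow> trm \<Rightarrow> 'a" where
  "eval_trm G e (Var i) = e i"
| "eval_trm G e One = \<one>\<^bsub>G\<^esub>"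
| "eval_trm G e (Mul s t) = eval_trm G e s \<otimes>\<^bsub>G\<^esub> eval_trm G e t"
| "eval_trm G e (Inv t) = inv\<^bsub>G\<^esub> (eval_trm G e t)"

fun sat_qf :: "('a, 'b) monoid_scheme \<Rightarrow> (cmp \<Rightarrow> rat \<Rightarrow> 'a \<Rightarrow> bool) \<Rightarrow> (nat \<Rightarrow> 'a) \<Rightarrow> qf \<Rightarrow> bool" where
  "sat_qf G P e TT = True"
| "sat_qf G P e FF = False"
| "sat_qf G P e (Eqt s t) = (eval_trm G e s = eval_trm G e t)"
| "sat_qf G P e (Rel c q t) = P c q (eval_trm G e t)"
| "sat_qf G P e (Neg p) = (\<not> sat_qf G P e p)"
| "sat_qf G P e (Conj p r) = (sat_qf G P e p \<and> sat_qf G P e r)"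
| "sat_qf G P e (Disj p r) = (sat_qf G P e p \<or> sat_qf G P e r)"

text \<open>The existential sentence obtained by existentially quantifying all variables
  of the quantifier-free matrix p holds in the structure (G,P).\<close>
definition ex_holds :: "('a, 'b) monoid_scheme \<Rightarrow> (cmp \<Rightarrow> rat \<Rightarrow> 'a \<Rightarrow> bool) \<Rightarrow> qf \<Rightarrow> bool" where
  "ex_holds G P p \<longleftrightarrow> (\<exists>e. range e \<subseteq> carrier G \<and> sat_qf G P e p)"

text \<open>The structure G^{square,Q} induced by a pseudo-norm.\<close>
definition norm_pred :: "('a \<Rightarrow> real) \<Rightarrow> cmp \<Rightarrow> rat \<Rightarrow> 'a \<Rightarrow> bool" where
  "norm_pred l c q g \<longleftrightarrow> cmpr c (l g) (of_rat q)"

definition le_pred :: "(cmp \<Rightarrow> rat \<Rightarrow> 'a \<Rightarrow> bool) \<Rightarrow> rat \<Rightarrow> 'a \<Rightarrow> bool" where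
  "le_pred P q g \<longleftrightarrow> P Lt q g \<or> P EqC q g"

definition ge_pred :: "(cmp \<Rightarrow> rat \<Rightarrow> 'a \<Rightarrow> bool) \<Rightarrow> rat \<Rightarrow> 'a \<Rightarrow> bool" where
  "ge_pred P q g \<longleftrightarrow> P Gt q g \<or> P EqC q g"

definition model_IPMG :: "real set \<Rightarrow> ('a, 'b) monoid_scheme \<Rightarrow> (cmp \<Rightarrow> rat \<Rightarrow> 'a \<Rightarrow> bool) \<Rightarrow> bool" where
  "model_IPMG Lam M P \<longleftrightarrow> group M \<and>
    (\<forall>a\<in>carrier M. \<forall>q. of_rat q \<in> Lam \<longrightarrow>
        ((P Lt q a \<and> \<not> P EqC q a \<and> \<not> P Gt q a) \<or>
         (\<not> P Lt q a \<and> P EqC q a \<and> \<not> P Gt q a) \<or>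
         (\<not> P Lt q a \<and> \<not> P EqC q a \<and> P Gt q a))) \<and>
    (\<forall>g\<in>carrier M. \<forall>q q'. of_rat q \<in> Lam \<longrightarrow> of_rat q' \<in> Lam \<longrightarrow> q \<le> q' \<longrightarrow>
        (le_pred P q g \<longrightarrow> le_pred P q' g) \<and> (ge_pred P q' g \<longrightarrow> ge_pred P q g)) \<and>
    P EqC 0 \<one>\<^bsub>M\<^esub> \<and>
    (\<forall>g\<in>carrier M. ge_pred P 0 g) \<and>
    (\<forall>g\<in>carrier M. \<forall>q c. of_rat q \<in> Lam \<longrightarrow> (P c q g \<longleftrightarrow> P c q (inv\<^bsub>M\<^esub> g))) \<and>
    (\<forall>g\<in>carrier M. \<forall>g'\<in>carrier M. \<forall>q q'. of_rat q \<in> Lam \<longrightarrow> of_rat q' \<in> Lam \<longrightarrow>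
        of_rat (q + q') \<in> Lam \<longrightarrow> le_pred P q g \<longrightarrow> le_pred P q' g' \<longrightarrow>
        le_pred P (q + q') (g \<otimes>\<^bsub>M\<^esub> g')) \<and>
    (\<forall>g\<in>carrier M. \<forall>h\<in>carrier M. \<forall>q c. of_rat q \<in> Lam \<longrightarrow>
        (P c q (h \<otimes>\<^bsub>M\<^esub> g \<otimes>\<^bsub>M\<^esub> inv\<^bsub>M\<^esub> h) \<longleftrightarrow> P c q g))"

definition model_IMG :: "real set \<Rightarrow> ('a, 'b) monoid_scheme \<Rightarrow> (cmp \<Rightarrow> rat \<Rightarrow> 'a \<Rightarrow> bool) \<Rightarrow> bool" where
  "model_IMG Lam M P \<longleftrightarrow> model_IPMG Lam M P \<and>
    (\<forall>g\<in>carrier M. le_pred P 0 g \<longrightarrow> g = \<one>\<^bsub>M\<^esub>)"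

text \<open>Finite models are taken with carrier in nat (every finite
  structure is isomorphic to one such, and truth is isomorphism invariant).\<close>
definition fmp_exist ::
  "real set \<Rightarrow> (nat monoid \<Rightarrow> (cmp \<Rightarrow> rat \<Rightarrow> nat \<Rightarrow> bool) \<Rightarrow> bool)
    \<Rightarrow> ('a, 'b) monoid_scheme \<Rightarrow> (cmp \<Rightarrow> rat \<Rightarrow> 'a \<Rightarrow> bool) \<Rightarrow> bool" where
  "fmp_exist Lam Mod G P \<longleftrightarrow>
     (\<forall>p. wf_qf Lam p \<longrightarrow> ex_holds G P p \<longrightarrow>
        (\<exists>(M :: nat monoid) PM. finite (carrier M) \<and> Mod M PM \<and> ex_holds M PM p))"

definition metrically_LEF :: "real set \<Rightarrow> ('a, 'b) monoid_scheme \<Rightarrow> ('a \<Rightarrow> real) \<Rightarrow> bool" where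
  "metrically_LEF Lam G l \<longleftrightarrow>
    (\<forall>D Q. D \<subseteq> carrier G \<longrightarrow> finite D \<longrightarrow> finite Q \<longrightarrow> (\<forall>q\<in>Q. of_rat q \<in> Lam) \<longrightarrow> 0 \<in> Q \<longrightarrow>
      (\<exists>(C :: nat monoid) lC \<phi>. group C \<and> finite (carrier C) \<and> inv_pseudo_norm Lam C lC \<and>
         \<phi> \<in> carrier G \<rightarrow> carrier C \<and> inj_on \<phi> D \<and>
         (\<forall>h\<in>D. \<forall>g\<in>D. h \<otimes>\<^bsub>G\<^esub> g \<in> D \<longrightarrow> \<phi> (h \<otimes>\<^bsub>G\<^esub> g) = \<phi> h \<otimes>\<^bsub>C\<^esub> \<phi> g) \<and>
         (\<forall>g\<in>D. \<forall>q\<in>Q. \<forall>c. cmpr c (l g) (of_rat q) \<longleftrightarrow> cmpr c (lC (\<phi> g)) (of_rat q))))"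

end

theory Submission
  imports Defs "HOL-Analysis.Elementary_Metric_Spaces"
begin

text \<open>An existential sentence true in \<open>(G, norm_pred l)\<close> speaks about finitely many elements and
  thresholds. A metric LEF approximation of these elements (and of \<open>1\<close>) preserves every atom, so the
  sentence holds in a finite group whose pseudo-norm makes it a model of \<open>T\<^sub>I\<^sub>P\<^sub>M\<^sub>G\<close>; raising that
  pseudo-norm to a small \<open>\<epsilon>\<close> away from \<open>1\<close> gives a model of \<open>T\<^sub>I\<^sub>M\<^sub>G\<close>.

  Conversely, for finite \<open>D\<close> and \<open>Q\<close> the diagram of \<open>D\<close> (its multiplication table, the inequalities
  between its elements and the comparisons of their norms with a finite grid \<open>T \<supseteq> Q\<close> of rational
  thresholds) is an existential sentence true in \<open>G\<close>. A finite model realises it by a partial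
  embedding of \<open>D\<close>, and rounding the norm encoded by the model up to the grid is an invariant
  pseudo-norm inducing the same comparisons with \<open>Q\<close>. For this the grid must be finer than every
  gap between a norm in \<open>D\<close> and a threshold in \<open>Q\<close>, and it is cut off where \<open>\<Lambda>\<close> ends, which is
  possible because a closed convex \<open>\<Lambda> \<ni> 0\<close> is an interval.\<close>

section \<open>Existential sentences along partial embeddings\<close>

fun subterms :: "trm \<Rightarrow> trm set" where
  "subterms (Var i) = {Var i}"
| "subterms One = {One}"
| "subterms (Mul s t) = insert (Mul s t) (subterms s \<union> subterms t)"
| "subterms (Inv t) = insert (Inv t) (subterms t)"

fun terms_of :: "qf \<Rightarrow> trm set" where
  "terms_of TT = {}"
| "terms_of FF = {}"
| "terms_of (Eqt s t) = subterms s \<union> subterms t"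
| "terms_of (Rel c q t) = subterms t"
| "terms_of (Neg p) = terms_of p"
| "terms_of (Conj p r) = terms_of p \<union> terms_of r"
| "terms_of (Disj p r) = terms_of p \<union> terms_of r"

fun rats_of :: "qf \<Rightarrow> rat set" where
  "rats_of (Rel c q t) = {q}"
| "rats_of (Neg p) = rats_of p"
| "rats_of (Conj p r) = rats_of p \<union> rats_of r"
| "rats_of (Disj p r) = rats_of p \<union> rats_of r"
| "rats_of _ = {}"

lemma finite_subterms: "finite (subterms t)"
  by (induction t) auto

lemma finite_terms_of: "finite (terms_of p)"
  by (induction p) (auto simp: finite_subterms)

lemma finite_rats_of: "finite (rats_of p)"
  by (induction p) auto

lemma subterms_refl: "t \<in> subterms t"
  by (cases t) auto

lemma wf_qf_rats_of: "wf_qf Lam p \<Longrightarrow> q \<in> rats_of p \<Longrightarrow> of_rat q \<in> Lam"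
  by (induction p) auto

lemma (in group) eval_trm_closed: "range e \<subseteq> carrier G \<Longrightarrow> eval_trm G e t \<in> carrier G"
  by (induction t) auto

definition approximates ::
  "('a, 'b) monoid_scheme \<Rightarrow> ('a \<Rightarrow> real) \<Rightarrow> 'a set \<Rightarrow> rat set
    \<Rightarrow> ('c, 'd) monoid_scheme \<Rightarrow> ('c \<Rightarrow> real) \<Rightarrow> ('a \<Rightarrow> 'c) \<Rightarrow> bool" where
  "approximates G l D Q C lC \<phi> \<longleftrightarrow>
     \<phi> \<in> carrier G \<rightarrow> carrier C \<and> inj_on \<phi> D \<and>
     (\<forall>h\<in>D. \<forall>g\<in>D. h \<otimes>\<^bsub>G\<^esub> g \<in> D \<longrightarrow> \<phi> (h \<otimes>\<^bsub>G\<^esub> g) = \<phi> h \<otimes>\<^bsub>C\<^esub> \<phi> g) \<and>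
     (\<forall>g\<in>D. \<forall>q\<in>Q. \<forall>c. cmpr c (l g) (of_rat q) \<longleftrightarrow> cmpr c (lC (\<phi> g)) (of_rat q))"

lemma metrically_LEF_iff_approximations:
  "metrically_LEF Lam G l \<longleftrightarrow>
    (\<forall>D Q. D \<subseteq> carrier G \<longrightarrow> finite D \<longrightarrow> finite Q \<longrightarrow> (\<forall>q\<in>Q. of_rat q \<in> Lam) \<longrightarrow> 0 \<in> Q \<longrightarrow>
      (\<exists>(C :: nat monoid) lC \<phi>. group C \<and> finite (carrier C) \<and> inv_pseudo_norm Lam C lC \<and>
         approximates G l D Q C lC \<phi>))"
  unfolding metrically_LEF_def approximates_def by (simp add: conj_assoc)

lemma partial_hom_one:
  assumes "group G" "group C" "\<phi> \<in> carrier G \<rightarrow> carrier C" "\<one>\<^bsub>G\<^esub> \<in> D"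
    and "\<forall>h\<in>D. \<forall>g\<in>D. h \<otimes>\<^bsub>G\<^esub> g \<in> D \<longrightarrow> \<phi> (h \<otimes>\<^bsub>G\<^esub> g) = \<phi> h \<otimes>\<^bsub>C\<^esub> \<phi> g"
  shows "\<phi> \<one>\<^bsub>G\<^esub> = \<one>\<^bsub>C\<^esub>"
proof -
  have "\<phi> \<one>\<^bsub>G\<^esub> \<otimes>\<^bsub>C\<^esub> \<phi> \<one>\<^bsub>G\<^esub> = \<phi> \<one>\<^bsub>G\<^esub>"
    using assms(1,4,5) by (metis group.is_monoid monoid.l_one monoid.one_closed)
  then show ?thesis
    using assms(1-3) by (metis funcset_mem group.l_cancel_one monoid.one_closed group.is_monoid)
qed

lemma partial_hom_inv:
  assumes G: "group G" and C: "group C" and \<phi>: "\<phi> \<in> carrier G \<rightarrow> carrier C"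
    and D: "\<one>\<^bsub>G\<^esub> \<in> D" "a \<in> D" "inv\<^bsub>G\<^esub> a \<in> D" "a \<in> carrier G"
    and hom: "\<forall>h\<in>D. \<forall>g\<in>D. h \<otimes>\<^bsub>G\<^esub> g \<in> D \<longrightarrow> \<phi> (h \<otimes>\<^bsub>G\<^esub> g) = \<phi> h \<otimes>\<^bsub>C\<^esub> \<phi> g"
  shows "\<phi> (inv\<^bsub>G\<^esub> a) = inv\<^bsub>C\<^esub> (\<phi> a)"
proof -
  have "\<phi> (inv\<^bsub>G\<^esub> a) \<otimes>\<^bsub>C\<^esub> \<phi> a = \<phi> \<one>\<^bsub>G\<^esub>"
    using hom D G by (metis group.l_inv)
  also have "\<dots> = \<one>\<^bsub>C\<^esub>"
    using partial_hom_one[OF G C \<phi> D(1) hom] .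
  finally show ?thesis
    using G C \<phi> D(4) by (metis funcset_mem group.inv_closed group.inv_equality)
qed

lemma approximates_eval_trm:
  assumes G: "group G" and C: "group C" and approx: "approximates G l D Q C lC \<phi>"
    and e: "range e \<subseteq> carrier G" and D: "\<one>\<^bsub>G\<^esub> \<in> D" "eval_trm G e ` subterms t \<subseteq> D"
  shows "eval_trm C (\<phi> \<circ> e) t = \<phi> (eval_trm G e t)"
  using D(2)
proof (induction t)
  case One
  have "\<phi> \<one>\<^bsub>G\<^esub> = \<one>\<^bsub>C\<^esub>"
    using partial_hom_one[OF G C _ D(1)] approx by (simp add: approximates_def)
  then show ?case by simp
next
  case (Mul s t)
  then have "eval_trm G e s \<in> D" "eval_trm G e t \<in> D" "eval_trm G e (Mul s t) \<in> D"
    and "eval_trm C (\<lambda>i. \<phi> (e i)) s = \<phi> (eval_trm G e s)"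
    and "eval_trm C (\<lambda>i. \<phi> (e i)) t = \<phi> (eval_trm G e t)"
    using subterms_refl[of s] subterms_refl[of t] by (auto simp: comp_def)
  then show ?case
    using approx by (simp add: approximates_def)
next
  case (Inv t)
  then show ?case
    using partial_hom_inv[OF G C _ D(1)] approx subterms_refl[of t] group.eval_trm_closed[OF G e]
    by (auto simp: approximates_def)
qed simp

lemma approximates_sat_qf:
  assumes G: "group G" and C: "group C" and approx: "approximates G l D Q C lC \<phi>"
    and e: "range e \<subseteq> carrier G"
    and D: "\<one>\<^bsub>G\<^esub> \<in> D" "eval_trm G e ` terms_of p \<subseteq> D" and Q: "rats_of p \<subseteq> Q"
  shows "sat_qf C (norm_pred lC) (\<phi> \<circ> e) p \<longleftrightarrow> sat_qf G (norm_pred l) e p"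
  using D(2) Q
proof (induction p)
  case (Eqt s t)
  have "eval_trm G e ` subterms s \<subseteq> D" "eval_trm G e ` subterms t \<subseteq> D"
    using Eqt by auto
  moreover have "eval_trm G e s \<in> D" "eval_trm G e t \<in> D"
    using Eqt subterms_refl[of s] subterms_refl[of t] by auto
  ultimately show ?case
    using approximates_eval_trm[OF G C approx e D(1), unfolded comp_def] approx
    by (simp add: approximates_def inj_on_eq_iff[of \<phi> D])
next
  case (Rel c q t)
  then show ?case
    using approximates_eval_trm[OF G C approx e D(1), unfolded comp_def] approx subterms_refl[of t]
    by (auto simp: approximates_def norm_pred_def)
qed auto

lemma fmp_exist_of_approximations:
  assumes G: "group G" and "0 \<in> Lam"
    and approx: "\<And>D Q. D \<subseteq> carrier G \<Longrightarrow> finite D \<Longrightarrow> finite Q \<Longrightarrow> \<forall>q\<in>Q. of_rat q \<in> Lam \<Longrightarrow> 0 \<in> Q \<Longrightarrow>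
      \<exists>(C :: nat monoid) lC \<phi>. group C \<and> finite (carrier C) \<and> Mod C (norm_pred lC) \<and>
        approximates G l D Q C lC \<phi>"
  shows "fmp_exist Lam Mod G (norm_pred l)"
  unfolding fmp_exist_def
proof (intro allI impI)
  fix p assume wf: "wf_qf Lam p" and "ex_holds G (norm_pred l) p"
  then obtain e where e: "range e \<subseteq> carrier G" and sat: "sat_qf G (norm_pred l) e p"
    unfolding ex_holds_def by blast
  define D where "D = insert \<one>\<^bsub>G\<^esub> (eval_trm G e ` terms_of p)"
  define Q where "Q = insert 0 (rats_of p)"
  have "D \<subseteq> carrier G" "finite D"
    using group.eval_trm_closed[OF G e] monoid.one_closed[OF group.is_monoid[OF G]] finite_terms_of
    by (auto simp: D_def)
  moreover have "finite Q" "\<forall>q\<in>Q. of_rat q \<in> Lam" "0 \<in> Q"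
    using finite_rats_of wf_qf_rats_of[OF wf] \<open>0 \<in> Lam\<close> by (auto simp: Q_def)
  ultimately obtain C :: "nat monoid" and lC \<phi> where
    C: "group C" "finite (carrier C)" "Mod C (norm_pred lC)" and a: "approximates G l D Q C lC \<phi>"
    using approx by blast
  have "sat_qf C (norm_pred lC) (\<phi> \<circ> e) p"
    using approximates_sat_qf[OF G C(1) a e, of p] sat by (auto simp: D_def Q_def)
  moreover have "range (\<phi> \<circ> e) \<subseteq> carrier C"
    using a e by (auto simp: approximates_def)
  ultimately show "\<exists>(M :: nat monoid) PM. finite (carrier M) \<and> Mod M PM \<and> ex_holds M PM p"
    using C unfolding ex_holds_def by blast
qed

section \<open>Models and norms from pseudo-norms\<close>

lemma inv_pseudo_normD:
  assumes "inv_pseudo_norm Lam G l"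
  shows inv_pseudo_norm_range: "g \<in> carrier G \<Longrightarrow> l g \<in> Lam"
    and inv_pseudo_norm_one: "l \<one>\<^bsub>G\<^esub> = 0"
    and inv_pseudo_norm_inv: "g \<in> carrier G \<Longrightarrow> l (inv\<^bsub>G\<^esub> g) = l g"
    and inv_pseudo_norm_triangle: "g \<in> carrier G \<Longrightarrow> h \<in> carrier G \<Longrightarrow> l (g \<otimes>\<^bsub>G\<^esub> h) \<le> l g + l h"
    and inv_pseudo_norm_conj: "g \<in> carrier G \<Longrightarrow> h \<in> carrier G \<Longrightarrow> l (inv\<^bsub>G\<^esub> h \<otimes>\<^bsub>G\<^esub> g \<otimes>\<^bsub>G\<^esub> h) = l g"
  using assms unfolding inv_pseudo_norm_def by (blast, blast, metis, blast, blast)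

lemma inv_pseudo_norm_zero_mem:
  assumes "group G" "inv_pseudo_norm Lam G l"
  shows "0 \<in> Lam"
  using inv_pseudo_norm_range[OF assms(2) monoid.one_closed[OF group.is_monoid[OF assms(1)]]]
    inv_pseudo_norm_one[OF assms(2)] by simp

lemma inv_pseudo_norm_nonneg:
  assumes G: "group G" and l: "inv_pseudo_norm Lam G l" and g: "g \<in> carrier G"
  shows "0 \<le> l g"
proof -
  have "0 = l (g \<otimes>\<^bsub>G\<^esub> inv\<^bsub>G\<^esub> g)"
    using inv_pseudo_norm_one[OF l] G g by (simp add: group.r_inv)
  also have "\<dots> \<le> l g + l (inv\<^bsub>G\<^esub> g)"
    using inv_pseudo_norm_triangle[OF l] G g by (simp add: group.inv_closed)
  also have "\<dots> = 2 * l g"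
    using inv_pseudo_norm_inv[OF l g] by simp
  finally show ?thesis by simp
qed

lemma model_IPMG_norm_pred:
  assumes C: "group C" and l: "inv_pseudo_norm Lam C l"
  shows "model_IPMG Lam C (norm_pred l)"
  unfolding model_IPMG_def le_pred_def ge_pred_def norm_pred_def
proof (intro conjI ballI allI impI)
  show "group C" by fact
next
  fix a q show "cmpr Lt (l a) (of_rat q) \<and> \<not> cmpr EqC (l a) (of_rat q) \<and> \<not> cmpr Gt (l a) (of_rat q) \<or>
       \<not> cmpr Lt (l a) (of_rat q) \<and> cmpr EqC (l a) (of_rat q) \<and> \<not> cmpr Gt (l a) (of_rat q) \<or>
       \<not> cmpr Lt (l a) (of_rat q) \<and> \<not> cmpr EqC (l a) (of_rat q) \<and> cmpr Gt (l a) (of_rat q)"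
    by auto
next
  fix g :: 'a and q q' :: rat assume "q \<le> q'"
  then have "(of_rat q :: real) \<le> of_rat q'" by (simp add: of_rat_less_eq)
  then show "cmpr Lt (l g) (of_rat q) \<or> cmpr EqC (l g) (of_rat q) \<Longrightarrow>
          cmpr Lt (l g) (of_rat q') \<or> cmpr EqC (l g) (of_rat q')"
    and "cmpr Gt (l g) (of_rat q') \<or> cmpr EqC (l g) (of_rat q') \<Longrightarrow>
          cmpr Gt (l g) (of_rat q) \<or> cmpr EqC (l g) (of_rat q)"
    by (simp_all only: cmpr.simps; linarith)+
next
  show "cmpr EqC (l \<one>\<^bsub>C\<^esub>) (of_rat 0)"
    using inv_pseudo_norm_one[OF l] by simp
next
  fix g assume "g \<in> carrier C"
  then show "cmpr Gt (l g) (of_rat 0) \<or> cmpr EqC (l g) (of_rat 0)"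
    using inv_pseudo_norm_nonneg[OF C l] by force
next
  fix g q c assume "g \<in> carrier C"
  then show "cmpr c (l g) (of_rat q) = cmpr c (l (inv\<^bsub>C\<^esub> g)) (of_rat q)"
    using inv_pseudo_norm_inv[OF l] by simp
next
  fix g g' q q' assume "g \<in> carrier C" "g' \<in> carrier C"
    and "cmpr Lt (l g) (of_rat q) \<or> cmpr EqC (l g) (of_rat q)"
    and "cmpr Lt (l g') (of_rat q') \<or> cmpr EqC (l g') (of_rat q')"
  then have "l (g \<otimes>\<^bsub>C\<^esub> g') \<le> of_rat q + of_rat q'"
    using inv_pseudo_norm_triangle[OF l] by fastforce
  then show "cmpr Lt (l (g \<otimes>\<^bsub>C\<^esub> g')) (of_rat (q + q')) \<or>
      cmpr EqC (l (g \<otimes>\<^bsub>C\<^esub> g')) (of_rat (q + q'))"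
    by (auto simp: of_rat_add)
next
  fix g h q c assume "g \<in> carrier C" "h \<in> carrier C"
  then have "l (h \<otimes>\<^bsub>C\<^esub> g \<otimes>\<^bsub>C\<^esub> inv\<^bsub>C\<^esub> h) = l g"
    using inv_pseudo_norm_conj[OF l, of g "inv\<^bsub>C\<^esub> h"] C by (simp add: group.inv_closed group.inv_inv)
  then show "cmpr c (l (h \<otimes>\<^bsub>C\<^esub> g \<otimes>\<^bsub>C\<^esub> inv\<^bsub>C\<^esub> h)) (of_rat q) = cmpr c (l g) (of_rat q)"
    by simp
qed

lemma model_IMG_norm_pred:
  assumes C: "group C" and l: "inv_pseudo_norm Lam C l" and "is_norm_on C l"
  shows "model_IMG Lam C (norm_pred l)"
  unfolding model_IMG_def
proof (intro conjI ballI impI)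
  show "model_IPMG Lam C (norm_pred l)" using model_IPMG_norm_pred[OF C l] .
  fix g assume "g \<in> carrier C" "le_pred (norm_pred l) 0 g"
  moreover then have "l g = 0"
    using inv_pseudo_norm_nonneg[OF C l] by (force simp: le_pred_def norm_pred_def)
  ultimately show "g = \<one>\<^bsub>C\<^esub>"
    using \<open>is_norm_on C l\<close> by (simp add: is_norm_on_def)
qed

lemma (in group) conj_eq_one_iff:
  assumes "g \<in> carrier G" "h \<in> carrier G"
  shows "inv h \<otimes> g \<otimes> h = \<one> \<longleftrightarrow> g = \<one>"
proof
  assume "inv h \<otimes> g \<otimes> h = \<one>"
  then have "h \<otimes> (inv h \<otimes> g \<otimes> h) \<otimes> inv h = \<one>"
    using assms by (simp add: m_assoc)
  then show "g = \<one>"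
    using assms by (simp add: m_assoc[symmetric] r_inv) (simp add: m_assoc)
qed (use assms in simp)

definition separated_norm :: "('a, 'b) monoid_scheme \<Rightarrow> ('a \<Rightarrow> real) \<Rightarrow> real \<Rightarrow> 'a \<Rightarrow> real" where
  "separated_norm C l \<epsilon> x = max (l x) (if x = \<one>\<^bsub>C\<^esub> then 0 else \<epsilon>)"

lemma inv_pseudo_norm_separated_norm:
  assumes C: "group C" and l: "inv_pseudo_norm Lam C l" and \<epsilon>: "\<epsilon> \<in> Lam"
  shows "inv_pseudo_norm Lam C (separated_norm C l \<epsilon>)"
  unfolding inv_pseudo_norm_def separated_norm_def
proof (intro conjI ballI)
  interpret group C by fact
  note l_nonneg = inv_pseudo_norm_nonneg[OF C l]
  show "max (l g) (if g = \<one>\<^bsub>C\<^esub> then 0 else \<epsilon>) \<in> Lam" if "g \<in> carrier C" for g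
    using inv_pseudo_norm_range[OF l that] inv_pseudo_norm_zero_mem[OF C l] \<epsilon> by (simp add: max_def)
  show "max (l \<one>\<^bsub>C\<^esub>) (if \<one>\<^bsub>C\<^esub> = \<one>\<^bsub>C\<^esub> then 0 else \<epsilon>) = 0"
    using inv_pseudo_norm_one[OF l] by simp
  show "max (l g) (if g = \<one>\<^bsub>C\<^esub> then 0 else \<epsilon>) =
      max (l (inv\<^bsub>C\<^esub> g)) (if inv\<^bsub>C\<^esub> g = \<one>\<^bsub>C\<^esub> then 0 else \<epsilon>)" if "g \<in> carrier C" for g
    using inv_pseudo_norm_inv[OF l that] that by simp
  show "max (l (inv\<^bsub>C\<^esub> h \<otimes>\<^bsub>C\<^esub> g \<otimes>\<^bsub>C\<^esub> h)) (if inv\<^bsub>C\<^esub> h \<otimes>\<^bsub>C\<^esub> g \<otimes>\<^bsub>C\<^esub> h = \<one>\<^bsub>C\<^esub> then 0 else \<epsilon>) =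
      max (l g) (if g = \<one>\<^bsub>C\<^esub> then 0 else \<epsilon>)" if "g \<in> carrier C" "h \<in> carrier C" for g h
    using inv_pseudo_norm_conj[OF l that] conj_eq_one_iff[OF that] by simp
  fix g h assume g: "g \<in> carrier C" and h: "h \<in> carrier C"
  have "g \<otimes>\<^bsub>C\<^esub> h \<noteq> \<one>\<^bsub>C\<^esub> \<Longrightarrow> g \<noteq> \<one>\<^bsub>C\<^esub> \<or> h \<noteq> \<one>\<^bsub>C\<^esub>"
    using h by auto
  then show "max (l (g \<otimes>\<^bsub>C\<^esub> h)) (if g \<otimes>\<^bsub>C\<^esub> h = \<one>\<^bsub>C\<^esub> then 0 else \<epsilon>)
      \<le> max (l g) (if g = \<one>\<^bsub>C\<^esub> then 0 else \<epsilon>) + max (l h) (if h = \<one>\<^bsub>C\<^esub> then 0 else \<epsilon>)"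
    using inv_pseudo_norm_triangle[OF l g h] l_nonneg[OF g] l_nonneg[OF h] l_nonneg[OF m_closed[OF g h]]
    by (auto simp: max_def)
qed

lemma is_norm_on_separated_norm: "0 < \<epsilon> \<Longrightarrow> is_norm_on C (separated_norm C l \<epsilon>)"
  by (auto simp: is_norm_on_def separated_norm_def max_def split: if_splits)

lemma approximates_separated_norm:
  assumes G: "group G" and C: "group C" and l: "inv_pseudo_norm Lam G l" "is_norm_on G l"
    and approx: "approximates G l D Q C lC \<phi>" and "D \<subseteq> carrier G" "0 \<in> Q"
    and \<epsilon>: "\<forall>g\<in>D. 0 < lC (\<phi> g) \<longrightarrow> \<epsilon> \<le> lC (\<phi> g)"
  shows "approximates G l D Q C (separated_norm C lC \<epsilon>) \<phi>"
proof -
  have cmp0: "cmpr c (l g) 0 \<longleftrightarrow> cmpr c (lC (\<phi> g)) 0" if "g \<in> D" for g c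
    using approx that \<open>0 \<in> Q\<close> unfolding approximates_def by (metis of_rat_0)
  have "separated_norm C lC \<epsilon> (\<phi> g) = lC (\<phi> g)" if g: "g \<in> D" for g
  proof (cases "g = \<one>\<^bsub>G\<^esub>")
    case True
    then have "\<phi> g = \<one>\<^bsub>C\<^esub>"
      using partial_hom_one[OF G C] approx g by (simp add: approximates_def)
    moreover have "lC (\<phi> g) = 0"
      using cmp0[OF g, of EqC] inv_pseudo_norm_one[OF l(1)] True by simp
    ultimately show ?thesis by (simp add: separated_norm_def)
  next
    case False
    then have "0 < l g"
      using inv_pseudo_norm_nonneg[OF G l(1)] l(2) g \<open>D \<subseteq> carrier G\<close>
      by (force simp: is_norm_on_def order.order_iff_strict)
    then have "0 < lC (\<phi> g)"
      using cmp0[OF g, of Gt] by simp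
    then show ?thesis
      using \<epsilon> g by (auto simp: separated_norm_def max_def)
  qed
  then show ?thesis
    using approx by (simp add: approximates_def)
qed

definition trivial_group :: "nat monoid" where
  "trivial_group = \<lparr>carrier = {0}, mult = (\<lambda>_ _. 0), one = 0\<rparr>"

lemma group_trivial_group: "group trivial_group"
  by (rule groupI) (auto simp: trivial_group_def)

lemma metrically_LEF_approximation:
  assumes "metrically_LEF Lam G l" "D \<subseteq> carrier G" "finite D" "finite Q" "\<forall>q\<in>Q. of_rat q \<in> Lam" "0 \<in> Q"
  obtains C :: "nat monoid" and lC \<phi> where "group C" "finite (carrier C)" "inv_pseudo_norm Lam C lC"
    "approximates G l D Q C lC \<phi>"
  using assms unfolding metrically_LEF_iff_approximations by meson

lemma norm_approximations:
  assumes G: "group G" and l: "inv_pseudo_norm Lam G l" "is_norm_on G l"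
    and lef: "metrically_LEF Lam G l"
    and D: "D \<subseteq> carrier G" "finite D" and Q: "finite Q" "\<forall>q\<in>Q. of_rat q \<in> Lam" "0 \<in> Q"
  shows "\<exists>(C :: nat monoid) lC \<phi>. group C \<and> finite (carrier C) \<and> inv_pseudo_norm Lam C lC \<and>
    is_norm_on C lC \<and> approximates G l D Q C lC \<phi>"
proof (cases "\<exists>x\<in>Lam. 0 < x")
  case True
  then obtain x where x: "x \<in> Lam" "0 < x" by blast
  obtain C :: "nat monoid" and lC \<phi> where C: "group C" "finite (carrier C)" "inv_pseudo_norm Lam C lC"
    and approx: "approximates G l D Q C lC \<phi>"
    using metrically_LEF_approximation[OF lef D Q] .
  define V where "V = insert x ((\<lambda>g. lC (\<phi> g)) ` {g \<in> D. 0 < lC (\<phi> g)})"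
  have "\<phi> ` D \<subseteq> carrier C"
    using approx D(1) by (auto simp: approximates_def)
  then have V: "finite V" "V \<subseteq> Lam" "\<forall>v\<in>V. 0 < v"
    using D(2) x inv_pseudo_norm_range[OF C(3)] by (auto simp: V_def)
  moreover have "Min V \<in> V"
    using V(1) by (rule Min_in) (simp add: V_def)
  ultimately have "Min V \<in> Lam" "0 < Min V"
    by auto
  moreover have "\<forall>g\<in>D. 0 < lC (\<phi> g) \<longrightarrow> Min V \<le> lC (\<phi> g)"
    using V(1) by (auto simp: V_def intro: Min_le)
  ultimately show ?thesis
    using C inv_pseudo_norm_separated_norm[OF C(1,3)] is_norm_on_separated_norm
      approximates_separated_norm[OF G C(1) l approx D(1) Q(3)] by meson
next
  case False
  \<comment> \<open>Then every norm value, a non-negative element of \<open>\<Lambda>\<close>, is \<open>0\<close>; so \<open>D \<subseteq> {1}\<close>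
    embeds into the trivial group.\<close>
  have "D \<subseteq> {\<one>\<^bsub>G\<^esub>}"
  proof
    fix g assume "g \<in> D"
    then have "l g = 0"
      using False D(1) inv_pseudo_norm_range[OF l(1)] inv_pseudo_norm_nonneg[OF G l(1)]
      by (force simp: not_less)
    then show "g \<in> {\<one>\<^bsub>G\<^esub>}"
      using l(2) \<open>g \<in> D\<close> D(1) by (auto simp: is_norm_on_def)
  qed
  then have "approximates G l D Q trivial_group (\<lambda>_. 0) (\<lambda>_. 0)"
    using inv_pseudo_norm_one[OF l(1)] by (auto simp: approximates_def trivial_group_def inj_on_def)
  moreover have "inv_pseudo_norm Lam trivial_group (\<lambda>_. 0)" "is_norm_on trivial_group (\<lambda>_. 0)"
    using inv_pseudo_norm_zero_mem[OF G l(1)]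
    by (auto simp: inv_pseudo_norm_def is_norm_on_def trivial_group_def)
  ultimately show ?thesis
    using group_trivial_group by (force simp: trivial_group_def)
qed

section \<open>Pseudo-norms from models\<close>

lemma model_IPMGD:
  assumes "model_IPMG Lam M P"
  shows model_IPMG_group: "group M"
    and model_IPMG_Gt_not_le: "a \<in> carrier M \<Longrightarrow> of_rat q \<in> Lam \<Longrightarrow> P Gt q a \<Longrightarrow> \<not> le_pred P q a"
    and model_IPMG_one: "le_pred P 0 \<one>\<^bsub>M\<^esub>"
    and model_IPMG_inv: "g \<in> carrier M \<Longrightarrow> of_rat q \<in> Lam \<Longrightarrow> P c q (inv\<^bsub>M\<^esub> g) \<longleftrightarrow> P c q g"
    and model_IPMG_mult: "g \<in> carrier M \<Longrightarrow> g' \<in> carrier M \<Longrightarrow> of_rat q \<in> Lam \<Longrightarrow> of_rat q' \<in> Lam \<Longrightarrow>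
        of_rat (q + q') \<in> Lam \<Longrightarrow> le_pred P q g \<Longrightarrow> le_pred P q' g' \<Longrightarrow> le_pred P (q + q') (g \<otimes>\<^bsub>M\<^esub> g')"
    and model_IPMG_conj: "g \<in> carrier M \<Longrightarrow> h \<in> carrier M \<Longrightarrow> of_rat q \<in> Lam \<Longrightarrow>
        P c q (h \<otimes>\<^bsub>M\<^esub> g \<otimes>\<^bsub>M\<^esub> inv\<^bsub>M\<^esub> h) \<longleftrightarrow> P c q g"
  using assms unfolding model_IPMG_def le_pred_def by (blast, metis, blast, metis, blast, metis)

lemma model_IPMG_le_pred_iff:
  assumes M: "model_IPMG Lam M P" and a: "a \<in> carrier M" and t: "of_rat t \<in> Lam"
    and true_atoms: "\<forall>c. cmpr c L (of_rat t) \<longrightarrow> P c t a"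
  shows "le_pred P t a \<longleftrightarrow> L \<le> of_rat t"
proof (cases "L \<le> of_rat t")
  case True
  then have "cmpr Lt L (of_rat t) \<or> cmpr EqC L (of_rat t)" by auto
  then show ?thesis using True true_atoms by (auto simp: le_pred_def)
next
  case False
  then have "P Gt t a" using true_atoms by simp
  then show ?thesis using model_IPMG_Gt_not_le[OF M a t] False by blast
qed

text \<open>Applied to \<open>le_pred P\<close>, this rounds the norm encoded by a model up to the grid \<open>T\<close>,
  with the cap \<open>K\<close> beyond it.\<close>

definition least_bound :: "rat set \<Rightarrow> real \<Rightarrow> (rat \<Rightarrow> bool) \<Rightarrow> real" where
  "least_bound T K B = (if \<exists>t\<in>T. B t then of_rat (Min {t\<in>T. B t}) else K)"

lemma least_bound_le:
  assumes "finite T" "t \<in> T" "B t"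
  shows "least_bound T K B \<le> of_rat t"
  using assms by (auto simp: least_bound_def of_rat_less_eq intro: Min_le)

lemma least_bound_cong:
  "(\<And>t. t \<in> T \<Longrightarrow> B t \<longleftrightarrow> B' t) \<Longrightarrow> least_bound T K B = least_bound T K B'"
  unfolding least_bound_def by (metis (mono_tags, lifting) Collect_cong)

lemma least_bound_attained:
  assumes "finite T" "\<exists>t\<in>T. B t"
  obtains t where "t \<in> T" "B t" "least_bound T K B = of_rat t"
proof -
  have "Min {t\<in>T. B t} \<in> {t\<in>T. B t}"
    using assms by (intro Min_in) auto
  then show ?thesis
    using that assms(2) by (auto simp: least_bound_def)
qed

lemma least_bound_cases:
  assumes "finite T"
  shows "least_bound T K B = K \<or> (\<exists>t\<in>T. B t \<and> least_bound T K B = of_rat t)"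
proof (cases "\<exists>t\<in>T. B t")
  case True
  then show ?thesis using least_bound_attained[OF assms] by metis
qed (simp add: least_bound_def)

lemma cmpr_cong_sign:
  fixes x y q :: real
  assumes "x < q \<Longrightarrow> y < q" "x = q \<Longrightarrow> y = q" "q < x \<Longrightarrow> q < y"
  shows "cmpr c y q \<longleftrightarrow> cmpr c x q"
  using assms by (cases c; cases x q rule: linorder_cases) auto

lemma cmpr_least_bound:
  assumes T: "finite T" "q \<in> T"
    and below: "L < of_rat q \<Longrightarrow> \<exists>t\<in>T. L \<le> of_rat t \<and> t < q"
    and above: "of_rat q < L \<Longrightarrow> of_rat q < K"
  shows "cmpr c (least_bound T K (\<lambda>t. L \<le> of_rat t)) (of_rat q) \<longleftrightarrow> cmpr c L (of_rat q)"
proof (rule cmpr_cong_sign)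
  let ?b = "least_bound T K (\<lambda>t. L \<le> of_rat t)"
  have lower: "L \<le> ?b" if "\<exists>t\<in>T. L \<le> of_rat t"
    using least_bound_attained[OF T(1) that] by metis
  show "?b < of_rat q" if lt: "L < of_rat q"
  proof -
    obtain t where "t \<in> T" "L \<le> of_rat t" "t < q"
      using below[OF lt] by blast
    moreover have "(of_rat t :: real) < of_rat q"
      using \<open>t < q\<close> by (simp add: of_rat_less)
    ultimately show ?thesis
      using least_bound_le[OF T(1), of t "\<lambda>t. L \<le> of_rat t" K] by linarith
  qed
  show "?b = of_rat q" if "L = of_rat q"
    using least_bound_le[OF T, of "\<lambda>t. L \<le> of_rat t" K] lower T(2) that by fastforce
  show "of_rat q < ?b" if "of_rat q < L"
  proof (cases "\<exists>t\<in>T. L \<le> of_rat t")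
    case True
    then show ?thesis using lower that by fastforce
  next
    case False
    then show ?thesis using above[OF that] by (simp add: least_bound_def)
  qed
qed

lemma inv_pseudo_norm_least_bound:
  assumes M: "model_IPMG Lam M P" and T: "finite T" "0 \<in> T"
    and T_bounds: "\<forall>t\<in>T. 0 \<le> t \<and> of_rat t \<le> K \<and> of_rat t \<in> Lam" and K: "K \<in> Lam"
    and T_sums: "\<forall>t\<in>T. \<forall>t'\<in>T. t + t' \<notin> T \<longrightarrow> K \<le> of_rat (t + t')"
  shows "inv_pseudo_norm Lam M (\<lambda>a. least_bound T K (\<lambda>t. le_pred P t a))"
proof -
  interpret group M using model_IPMG_group[OF M] .
  define n where "n = (\<lambda>a. least_bound T K (\<lambda>t. le_pred P t a))"
  have n_cases: "n a = K \<or> (\<exists>t\<in>T. le_pred P t a \<and> n a = of_rat t)" for a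
    unfolding n_def using least_bound_cases[OF T(1)] .
  have n_bounds: "0 \<le> n a" "n a \<le> K" for a
    using n_cases[of a] T_bounds T(2) by (fastforce simp: zero_le_of_rat_iff)+
  have n_cong: "n a = n b" if "\<And>t. t \<in> T \<Longrightarrow> le_pred P t a \<longleftrightarrow> le_pred P t b" for a b
    unfolding n_def using that by (rule least_bound_cong)
  have "n \<one>\<^bsub>M\<^esub> \<le> 0"
    using least_bound_le[OF T, of "\<lambda>t. le_pred P t \<one>\<^bsub>M\<^esub>" K] model_IPMG_one[OF M]
    unfolding n_def by simp
  then have n_one: "n \<one>\<^bsub>M\<^esub> = 0"
    using n_bounds(1)[of "\<one>\<^bsub>M\<^esub>"] by simp
  have n_Lam: "n a \<in> Lam" for a
    using n_cases[of a] T_bounds K by auto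
  have n_inv: "n g = n (inv\<^bsub>M\<^esub> g)" if "g \<in> carrier M" for g
    using model_IPMG_inv[OF M that] T_bounds by (intro n_cong) (auto simp: le_pred_def)
  have n_conj: "n (inv\<^bsub>M\<^esub> h \<otimes>\<^bsub>M\<^esub> g \<otimes>\<^bsub>M\<^esub> h) = n g" if "g \<in> carrier M" "h \<in> carrier M" for g h
    using model_IPMG_conj[OF M that(1) inv_closed[OF that(2)]] that(2) T_bounds
    by (intro n_cong) (auto simp: le_pred_def)
  have n_triangle: "n (g \<otimes>\<^bsub>M\<^esub> h) \<le> n g + n h" if g: "g \<in> carrier M" and h: "h \<in> carrier M" for g h
  proof (cases "n g = K \<or> n h = K")
    case True
    then show ?thesis using n_bounds[of g] n_bounds[of h] n_bounds[of "g \<otimes>\<^bsub>M\<^esub> h"] by linarith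
  next
    case False
    then obtain r r' where r: "r \<in> T" "le_pred P r g" "n g = of_rat r"
      and r': "r' \<in> T" "le_pred P r' h" "n h = of_rat r'"
      using n_cases[of g] n_cases[of h] by blast
    show ?thesis
    proof (cases "r + r' \<in> T")
      case True
      then have "le_pred P (r + r') (g \<otimes>\<^bsub>M\<^esub> h)"
        using model_IPMG_mult[OF M g h] r r' T_bounds by blast
      then show ?thesis
        using least_bound_le[OF T(1) True] r r' unfolding n_def by (simp add: of_rat_add)
    next
      case False
      then show ?thesis
        using T_sums r r' n_bounds(2)[of "g \<otimes>\<^bsub>M\<^esub> h"] by (force simp: of_rat_add)
    qed
  qed
  have "inv_pseudo_norm Lam M n"
    unfolding inv_pseudo_norm_def by (intro conjI ballI n_Lam n_one n_inv n_conj n_triangle)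
  then show ?thesis
    by (simp add: n_def)
qed

section \<open>Threshold grids\<close>

lemma common_denominator:
  assumes "finite (Q :: rat set)"
  shows "\<exists>N > 0. \<forall>q\<in>Q. q * of_nat N \<in> \<int>"
  using assms
proof (induction Q rule: finite_induct)
  case (insert q F)
  then obtain N where N: "N > 0" "\<forall>q\<in>F. q * of_nat N \<in> \<int>"
    by blast
  obtain a d where ad: "quotient_of q = (a, d)"
    by (cases "quotient_of q")
  then have d: "d > 0" and q: "q = of_int a / of_int d"
    by (simp_all add: quotient_of_denom_pos quotient_of_div)
  show ?case
  proof (intro exI[of _ "N * nat d"] conjI ballI)
    show "N * nat d > 0"
      using N(1) d by simp
    fix q' assume "q' \<in> insert q F"
    then show "q' * of_nat (N * nat d) \<in> \<int>"
    proof
      assume "q' = q"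
      moreover have "q * of_nat (N * nat d) = of_int (a * int N)"
        using d by (simp add: q field_simps)
      ultimately show ?thesis
        by (metis Ints_of_int)
    next
      assume "q' \<in> F"
      moreover have "q' * of_nat (N * nat d) = (q' * of_nat N) * of_int d"
        using d by (simp add: field_simps)
      ultimately show ?thesis
        using N(2) by (metis Ints_mult Ints_of_int)
    qed
  qed
qed auto

lemma fine_common_denominator:
  assumes "finite (Q :: rat set)" "0 < \<delta>"
  shows "\<exists>N > 0. (\<forall>q\<in>Q. q * of_nat N \<in> \<int>) \<and> 1 / real N \<le> \<delta>"
proof -
  obtain N where N: "N > 0" "\<forall>q\<in>Q. q * of_nat N \<in> \<int>"
    using common_denominator[OF assms(1)] by blast
  obtain m where m: "inverse (of_nat (Suc m)) < \<delta>"
    using reals_Archimedean[OF assms(2)] by blast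
  have "q * of_nat (N * Suc m) \<in> \<int>" if "q \<in> Q" for q
  proof -
    have "q * of_nat (N * Suc m) = (q * of_nat N) * of_nat (Suc m)"
      by (simp only: of_nat_mult mult.assoc)
    then show ?thesis
      using N(2) that by (metis Ints_mult Ints_of_nat)
  qed
  moreover have "Suc m \<le> N * Suc m"
    using N(1) by (simp del: mult_Suc_right)
  then have "1 / real (N * Suc m) \<le> 1 / real (Suc m)"
    using frac_le[of 1 1 "real (Suc m)" "real (N * Suc m)"] by (simp only: of_nat_le_iff)
  ultimately show ?thesis
    using N(1) m by (intro exI[of _ "N * Suc m"]) (auto simp: inverse_eq_divide)
qed

lemma finite_grid:
  assumes "N > 0"
  shows "finite {t :: rat. 0 \<le> t \<and> t * of_nat N \<in> \<int> \<and> t \<le> b}"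
proof (rule finite_subset)
  show "{t. 0 \<le> t \<and> t * of_nat N \<in> \<int> \<and> t \<le> b} \<subseteq> (\<lambda>k. of_int k / of_nat N) ` {0..\<lceil>b * of_nat N\<rceil>}"
  proof
    fix t assume t: "t \<in> {t. 0 \<le> t \<and> t * of_nat N \<in> \<int> \<and> t \<le> b}"
    then obtain k where k: "t * of_nat N = of_int k"
      by (auto elim: Ints_cases)
    have "0 \<le> t * of_nat N" "t * of_nat N \<le> b * of_nat N"
      using t by (simp_all add: mult_right_mono)
    then have "k \<in> {0..\<lceil>b * of_nat N\<rceil>}"
      using k le_of_int_ceiling[of "b * of_nat N"] by (simp del: of_int_le_iff; linarith)
    moreover have "t = of_int k / of_nat N"
      using k assms by (simp add: eq_divide_eq)
    ultimately show "t \<in> (\<lambda>k. of_int k / of_nat N) ` {0..\<lceil>b * of_nat N\<rceil>}"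
      by blast
  qed
qed simp

lemma convex_initial_segment:
  fixes Lam :: "real set"
  assumes "convex Lam" "0 \<in> Lam" "x \<in> Lam" "0 \<le> x"
  shows "{0..x} \<subseteq> Lam"
proof
  fix y assume y: "y \<in> {0..x}"
  show "y \<in> Lam"
  proof (cases "x = 0")
    case False
    then have "(1 - y / x) *\<^sub>R 0 + (y / x) *\<^sub>R x \<in> Lam"
      using assms y by (intro convexD[OF assms(1)]) (auto simp: field_simps)
    then show ?thesis
      using False by simp
  qed (use assms y in auto)
qed

lemma closed_convex_truncation:
  fixes Lam :: "real set"
  assumes "closed Lam" "convex Lam" "0 \<in> Lam" "Lam \<subseteq> {0..}" "0 \<le> M"
  obtains K where "0 \<le> K" "K \<le> M" "{0..K} \<subseteq> Lam" "K = M \<or> Lam \<subseteq> {..K}"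
proof (cases "\<exists>x\<in>Lam. M \<le> x")
  case True
  then obtain x where "x \<in> Lam" "M \<le> x"
    by blast
  then have "{0..M} \<subseteq> Lam"
    using convex_initial_segment[OF assms(2,3)] assms(5) by force
  then show ?thesis
    using that[of M] assms(5) by simp
next
  case False
  then have "bdd_above Lam"
    by (meson bdd_above.I linorder_linear)
  then have "Sup Lam \<in> Lam" "Lam \<subseteq> {..Sup Lam}"
    using closed_contains_Sup[OF _ _ assms(1)] assms(3) cSup_upper by auto
  moreover have "Sup Lam \<le> M"
    using assms(3) False by (intro cSup_least) auto
  ultimately show ?thesis
    using that[of "Sup Lam"] convex_initial_segment[OF assms(2,3)] assms(4) by auto
qed

lemma grid_predecessor:
  assumes "N > 0" "q * of_nat N \<in> \<int>" "1 / real N \<le> of_rat q - L"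
  shows "(q - 1 / of_nat N) * of_nat N \<in> \<int>" "L \<le> of_rat (q - 1 / of_nat N)" "q - 1 / of_nat N < q"
proof -
  have "(q - 1 / of_nat N) * of_nat N = q * of_nat N - 1"
    using assms(1) by (simp add: field_simps)
  then show "(q - 1 / of_nat N) * of_nat N \<in> \<int>"
    using assms(2) by simp
  show "L \<le> of_rat (q - 1 / of_nat N)"
    using assms(3) by (simp add: of_rat_diff of_rat_divide)
  show "q - 1 / of_nat N < q"
    using assms(1) by simp
qed

text \<open>The grid \<open>T\<close> consists of the non-negative multiples of \<open>1/N\<close> up to \<open>K\<close>, where \<open>1/N\<close> is
  below every gap between a norm in \<open>Ls\<close> and a larger threshold in \<open>Q\<close>, and \<open>K\<close> is the smaller of
  \<open>max Q + 1\<close> and \<open>sup \<Lambda>\<close>.\<close>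

lemma grid_thresholds:
  fixes Lam :: "real set"
  assumes Lam: "closed Lam" "convex Lam" "0 \<in> Lam" "Lam \<subseteq> {0..}"
    and Q: "finite Q" "\<forall>q\<in>Q. of_rat q \<in> Lam" and Ls: "finite Ls" "Ls \<subseteq> Lam"
  obtains T K where "finite T" "Q \<subseteq> T" "K \<in> Lam"
    "\<forall>t\<in>T. 0 \<le> t \<and> of_rat t \<le> K \<and> of_rat t \<in> Lam"
    "\<forall>t\<in>T. \<forall>t'\<in>T. t + t' \<notin> T \<longrightarrow> K \<le> of_rat (t + t')"
    "\<forall>L\<in>Ls. \<forall>q\<in>Q. (L < of_rat q \<longrightarrow> (\<exists>t\<in>T. L \<le> of_rat t \<and> t < q)) \<and> (of_rat q < L \<longrightarrow> of_rat q < K)"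
proof -
  define gaps where "gaps = (\<lambda>(L, q). of_rat q - L) ` {(L, q) \<in> Ls \<times> Q. L < of_rat q}"
  have "finite gaps"
    unfolding gaps_def by (rule finite_imageI, rule finite_subset[of _ "Ls \<times> Q"]) (use Q(1) Ls(1) in auto)
  moreover have "\<forall>x\<in>gaps. 0 < x"
    by (auto simp: gaps_def)
  ultimately have "0 < Min (insert 1 gaps)"
    by simp
  then obtain N where N: "N > 0" "\<forall>q\<in>Q. q * of_nat N \<in> \<int>" "1 / real N \<le> Min (insert 1 gaps)"
    using fine_common_denominator[OF Q(1)] by blast
  have gap: "1 / real N \<le> of_rat q - L" if "L \<in> Ls" "q \<in> Q" "L < of_rat q" for L q
  proof -
    have "Min (insert 1 gaps) \<le> of_rat q - L"
      using \<open>finite gaps\<close> that by (intro Min_le) (auto simp: gaps_def)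
    then show ?thesis using N(3) by linarith
  qed
  define Mx where "Mx = Max (insert 0 Q) + 1"
  have Mx: "q < Mx" if "q \<in> insert 0 Q" for q
  proof -
    have "q \<le> Max (insert 0 Q)"
      using Q(1) that by (intro Max_ge) auto
    then show ?thesis by (simp add: Mx_def)
  qed
  have "0 \<le> (of_rat Mx :: real)"
    using Mx[of 0] by (simp add: zero_le_of_rat_iff)
  then obtain K where K: "0 \<le> K" "K \<le> of_rat Mx" "{0..K} \<subseteq> Lam" "K = of_rat Mx \<or> Lam \<subseteq> {..K}"
    by (rule closed_convex_truncation[OF Lam])
  define T where "T = {t. 0 \<le> t \<and> t * of_nat N \<in> \<int> \<and> of_rat t \<le> K}"
  have below_K: "of_rat q < K" if "q \<in> insert 0 Q" "of_rat q < L" "L \<in> Lam" for q L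
    using K(4) Mx[OF that(1)] that(2,3) by (auto simp: of_rat_less)
  have Q_le_K: "of_rat q \<le> K" if "q \<in> Q" for q
    using K(4) Mx[of q] Q(2) that by (auto simp: of_rat_less_eq)
  have "T \<subseteq> {t. 0 \<le> t \<and> t * of_nat N \<in> \<int> \<and> t \<le> Mx}"
    using K(2) by (auto simp: T_def) (meson of_rat_less_eq order_trans)
  then have finite_T: "finite T"
    using finite_grid[OF N(1)] by (rule finite_subset)
  have Q_T: "Q \<subseteq> T"
    using Q(2) Lam(4) N(2) Q_le_K by (force simp: T_def zero_le_of_rat_iff)
  have K_Lam: "K \<in> Lam" and T_bounds: "\<forall>t\<in>T. 0 \<le> t \<and> of_rat t \<le> K \<and> of_rat t \<in> Lam"
    using K(1,3) by (auto simp: T_def zero_le_of_rat_iff)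
  have T_sums: "\<forall>t\<in>T. \<forall>t'\<in>T. t + t' \<notin> T \<longrightarrow> K \<le> of_rat (t + t')"
    by (auto simp: T_def distrib_right)
  have below: "\<exists>t\<in>T. L \<le> of_rat t \<and> t < q" if "L \<in> Ls" "q \<in> Q" "L < of_rat q" for L q
  proof (intro bexI conjI)
    note pred = grid_predecessor[OF N(1) N(2)[rule_format, OF that(2)] gap[OF that]]
    show "L \<le> of_rat (q - 1 / of_nat N)" "q - 1 / of_nat N < q"
      using pred(2,3) .
    have "0 \<le> L"
      using Ls(2) Lam(4) that(1) by auto
    then have "0 \<le> (of_rat (q - 1 / of_nat N) :: real)"
      using pred(2) by linarith
    then have "0 \<le> q - 1 / of_nat N"
      by (simp only: zero_le_of_rat_iff)
    moreover have "of_rat (q - 1 / of_nat N) \<le> K"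
      using pred(3) Q_le_K[OF that(2)] by (meson of_rat_less_eq less_imp_le order_trans)
    ultimately show "q - 1 / of_nat N \<in> T"
      using pred(1) by (simp add: T_def)
  qed
  show ?thesis
    using below below_K Ls(2) by (intro that[OF finite_T Q_T K_Lam T_bounds T_sums]) auto
qed

section \<open>Diagrams\<close>

lemma sat_qf_foldr_Conj: "sat_qf G P e (foldr Conj xs TT) \<longleftrightarrow> (\<forall>a\<in>set xs. sat_qf G P e a)"
  by (induction xs) auto

lemma wf_qf_foldr_Conj: "wf_qf Lam (foldr Conj xs TT) \<longleftrightarrow> (\<forall>a\<in>set xs. wf_qf Lam a)"
  by (induction xs) auto

lemma fmp_existE:
  assumes "fmp_exist Lam Mod G P" and S: "finite S" "\<forall>a\<in>S. wf_qf Lam a"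
    and e: "range e \<subseteq> carrier G" "\<forall>a\<in>S. sat_qf G P e a"
  obtains M :: "nat monoid" and PM e' where "finite (carrier M)" "Mod M PM"
    "range e' \<subseteq> carrier M" "\<forall>a\<in>S. sat_qf M PM e' a"
proof -
  obtain xs where xs: "set xs = S"
    using finite_list[OF S(1)] by blast
  have "wf_qf Lam (foldr Conj xs TT)" "ex_holds G P (foldr Conj xs TT)"
    using S(2) e by (auto simp: xs wf_qf_foldr_Conj sat_qf_foldr_Conj ex_holds_def)
  then obtain M :: "nat monoid" and PM where "finite (carrier M)" "Mod M PM" "ex_holds M PM (foldr Conj xs TT)"
    using assms(1) unfolding fmp_exist_def by meson
  then show ?thesis
    using that unfolding ex_holds_def sat_qf_foldr_Conj xs by meson
qed

lemma finite_UNIV_cmp: "finite (UNIV :: cmp set)"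
proof -
  have "(UNIV :: cmp set) = {Lt, EqC, Gt}"
    by (auto intro: cmp.exhaust)
  then show ?thesis
    by (metis finite.emptyI finite.insertI)
qed

text \<open>The variable \<open>v g\<close> stands for the element \<open>g\<close> of \<open>D\<close>.\<close>

definition diagram ::
  "('a, 'b) monoid_scheme \<Rightarrow> ('a \<Rightarrow> real) \<Rightarrow> ('a \<Rightarrow> nat) \<Rightarrow> 'a set \<Rightarrow> rat set \<Rightarrow> qf set" where
  "diagram G l v D T =
     (\<lambda>(g, h). Eqt (Mul (Var (v g)) (Var (v h))) (Var (v (g \<otimes>\<^bsub>G\<^esub> h)))) ` {(g, h) \<in> D \<times> D. g \<otimes>\<^bsub>G\<^esub> h \<in> D}
   \<union> (\<lambda>(g, h). Neg (Eqt (Var (v g)) (Var (v h)))) ` {(g, h) \<in> D \<times> D. g \<noteq> h}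
   \<union> (\<lambda>(c, t, g). Rel c t (Var (v g))) ` {(c, t, g). t \<in> T \<and> g \<in> D \<and> cmpr c (l g) (of_rat t)}"

lemma finite_diagram:
  assumes "finite D" "finite T"
  shows "finite (diagram G l v D T)"
proof -
  have "{(c, t, g). t \<in> T \<and> g \<in> D \<and> cmpr c (l g) (of_rat t)} \<subseteq> UNIV \<times> T \<times> D"
    by auto
  then have "finite {(c, t, g). t \<in> T \<and> g \<in> D \<and> cmpr c (l g) (of_rat t)}"
    using assms finite_UNIV_cmp by (meson finite_SigmaI finite_subset)
  moreover have "finite {(g, h) \<in> D \<times> D. g \<otimes>\<^bsub>G\<^esub> h \<in> D}" "finite {(g, h) \<in> D \<times> D. g \<noteq> h}"
    using assms(1) by (auto intro: finite_subset[of _ "D \<times> D"])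
  ultimately show ?thesis
    by (simp add: diagram_def)
qed

lemma wf_qf_diagram: "\<forall>t\<in>T. of_rat t \<in> Lam \<Longrightarrow> \<forall>a\<in>diagram G l v D T. wf_qf Lam a"
  by (auto simp: diagram_def)

lemma diagram_holds:
  assumes G: "group G" and D: "D \<subseteq> carrier G" and v: "inj_on v D"
  obtains e where "range e \<subseteq> carrier G" "\<forall>a\<in>diagram G l v D T. sat_qf G (norm_pred l) e a"
proof
  define e where "e i = (if i \<in> v ` D then the_inv_into D v i else \<one>\<^bsub>G\<^esub>)" for i
  have e_v: "e (v g) = g" if "g \<in> D" for g
    using v that by (simp add: e_def the_inv_into_f_f)
  show "range e \<subseteq> carrier G"
    using D v monoid.one_closed[OF group.is_monoid[OF G]] by (auto simp: e_def the_inv_into_f_f)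
  show "\<forall>a\<in>diagram G l v D T. sat_qf G (norm_pred l) e a"
    by (auto simp: diagram_def e_v norm_pred_def)
qed

lemma diagram_realised:
  assumes sat: "\<forall>a\<in>diagram G l v D T. sat_qf M P e a"
  shows "inj_on (e \<circ> v) D"
    and "\<forall>h\<in>D. \<forall>g\<in>D. h \<otimes>\<^bsub>G\<^esub> g \<in> D \<longrightarrow> e (v (h \<otimes>\<^bsub>G\<^esub> g)) = e (v h) \<otimes>\<^bsub>M\<^esub> e (v g)"
    and "\<forall>g\<in>D. \<forall>t\<in>T. \<forall>c. cmpr c (l g) (of_rat t) \<longrightarrow> P c t (e (v g))"
proof -
  have "Neg (Eqt (Var (v g)) (Var (v h))) \<in> diagram G l v D T" if "g \<in> D" "h \<in> D" "g \<noteq> h" for g h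
    unfolding diagram_def by (rule UnI1, rule UnI2, rule image_eqI[where x = "(g, h)"]) (use that in auto)
  then show "inj_on (e \<circ> v) D"
    using sat by (fastforce intro: inj_onI)
  have "Eqt (Mul (Var (v h)) (Var (v g))) (Var (v (h \<otimes>\<^bsub>G\<^esub> g))) \<in> diagram G l v D T"
    if "h \<in> D" "g \<in> D" "h \<otimes>\<^bsub>G\<^esub> g \<in> D" for h g
    unfolding diagram_def by (rule UnI1, rule UnI1, rule image_eqI[where x = "(h, g)"]) (use that in auto)
  then show "\<forall>h\<in>D. \<forall>g\<in>D. h \<otimes>\<^bsub>G\<^esub> g \<in> D \<longrightarrow> e (v (h \<otimes>\<^bsub>G\<^esub> g)) = e (v h) \<otimes>\<^bsub>M\<^esub> e (v g)"
    using sat by fastforce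
  have "Rel c t (Var (v g)) \<in> diagram G l v D T" if "g \<in> D" "t \<in> T" "cmpr c (l g) (of_rat t)" for g t c
    unfolding diagram_def by (rule UnI2, rule image_eqI[where x = "(c, t, g)"]) (use that in auto)
  then show "\<forall>g\<in>D. \<forall>t\<in>T. \<forall>c. cmpr c (l g) (of_rat t) \<longrightarrow> P c t (e (v g))"
    using sat by fastforce
qed

lemma metrically_LEF_of_fmp_exist:
  assumes Lam: "closed Lam" "convex Lam" "Lam \<subseteq> {0..}" "0 \<in> Lam"
    and G: "group G" and l: "inv_pseudo_norm Lam G l"
    and fmp: "fmp_exist Lam (model_IPMG Lam) G (norm_pred l)"
  shows "metrically_LEF Lam G l"
  unfolding metrically_LEF_iff_approximations
proof (intro allI impI)
  fix D Q assume D: "D \<subseteq> carrier G" "finite D" and Q: "finite Q" "\<forall>q\<in>Q. of_rat q \<in> Lam" "0 \<in> Q"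
  have "l ` D \<subseteq> Lam"
    using D(1) inv_pseudo_norm_range[OF l] by auto
  then obtain T K where T: "finite T" "Q \<subseteq> T" "K \<in> Lam"
      "\<forall>t\<in>T. 0 \<le> t \<and> of_rat t \<le> K \<and> of_rat t \<in> Lam"
      "\<forall>t\<in>T. \<forall>t'\<in>T. t + t' \<notin> T \<longrightarrow> K \<le> of_rat (t + t')"
    and sep: "\<forall>L\<in>l ` D. \<forall>q\<in>Q. (L < of_rat q \<longrightarrow> (\<exists>t\<in>T. L \<le> of_rat t \<and> t < q)) \<and>
      (of_rat q < L \<longrightarrow> of_rat q < K)"
    by (rule grid_thresholds[OF Lam(1,2,4,3) Q(1,2) finite_imageI[OF D(2)]])
  obtain v :: "'a \<Rightarrow> nat" where v: "inj_on v D"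
    using finite_imp_inj_to_nat_seg[OF D(2)] by blast
  obtain e where "range e \<subseteq> carrier G" "\<forall>a\<in>diagram G l v D T. sat_qf G (norm_pred l) e a"
    by (rule diagram_holds[OF G D(1) v])
  then obtain M :: "nat monoid" and PM e' where M: "finite (carrier M)" "model_IPMG Lam M PM"
    and e': "range e' \<subseteq> carrier M" "\<forall>a\<in>diagram G l v D T. sat_qf M PM e' a"
    using fmp_existE[OF fmp finite_diagram[OF D(2) T(1)] wf_qf_diagram] T(4) by metis
  define lC where "lC = (\<lambda>a. least_bound T K (\<lambda>t. le_pred PM t a))"
  have lC: "inv_pseudo_norm Lam M lC"
    unfolding lC_def using inv_pseudo_norm_least_bound[OF M(2) T(1) _ T(4,3,5)] T(2) Q(3) by blast
  have lC_eq: "lC (e' (v g)) = least_bound T K (\<lambda>t. l g \<le> of_rat t)" if "g \<in> D" for g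
    unfolding lC_def using that T(4) diagram_realised(3)[OF e'(2)] e'(1)
    by (intro least_bound_cong model_IPMG_le_pred_iff[OF M(2)]) auto
  have "cmpr c (l g) (of_rat q) \<longleftrightarrow> cmpr c (lC ((e' \<circ> v) g)) (of_rat q)" if "g \<in> D" "q \<in> Q" for g q c
    using lC_eq cmpr_least_bound[OF T(1)] sep T(2) that by auto
  then have "approximates G l D Q M lC (e' \<circ> v)"
    using e'(1) diagram_realised(1,2)[OF e'(2)] by (auto simp: approximates_def)
  then show "\<exists>(C :: nat monoid) lC \<phi>. group C \<and> finite (carrier C) \<and> inv_pseudo_norm Lam C lC \<and>
      approximates G l D Q C lC \<phi>"
    using M lC model_IPMG_group by blast
qed

lemma fmp_exist_IPMG_of_metrically_LEF:
  assumes "group G" "0 \<in> Lam" "metrically_LEF Lam G l"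
  shows "fmp_exist Lam (model_IPMG Lam) G (norm_pred l)"
proof (rule fmp_exist_of_approximations[OF assms(1,2)])
  fix D Q assume "D \<subseteq> carrier G" "finite D" "finite Q" "\<forall>q\<in>Q. of_rat q \<in> Lam" "0 \<in> Q"
  then obtain C :: "nat monoid" and lC \<phi> where "group C" "finite (carrier C)" "inv_pseudo_norm Lam C lC"
    "approximates G l D Q C lC \<phi>"
    by (rule metrically_LEF_approximation[OF assms(3)])
  then show "\<exists>(C :: nat monoid) lC \<phi>. group C \<and> finite (carrier C) \<and> model_IPMG Lam C (norm_pred lC) \<and>
      approximates G l D Q C lC \<phi>"
    using model_IPMG_norm_pred by blast
qed

lemma fmp_exist_IMG_of_metrically_LEF:
  assumes "group G" "inv_pseudo_norm Lam G l" "is_norm_on G l" "metrically_LEF Lam G l"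
  shows "fmp_exist Lam (model_IMG Lam) G (norm_pred l)"
proof (rule fmp_exist_of_approximations[OF assms(1)])
  show "0 \<in> Lam"
    using inv_pseudo_norm_zero_mem[OF assms(1,2)] .
  fix D Q assume "D \<subseteq> carrier G" "finite D" "finite Q" "\<forall>q\<in>Q. of_rat q \<in> Lam" "0 \<in> Q"
  then show "\<exists>(C :: nat monoid) lC \<phi>. group C \<and> finite (carrier C) \<and> model_IMG Lam C (norm_pred lC) \<and>
      approximates G l D Q C lC \<phi>"
    using norm_approximations[OF assms] model_IMG_norm_pred by meson
qed

lemma fmp_exist_mono:
  "fmp_exist Lam Mod G P \<Longrightarrow> (\<And>M PM. Mod M PM \<Longrightarrow> Mod' M PM) \<Longrightarrow> fmp_exist Lam Mod' G P"
  unfolding fmp_exist_def by blast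

theorem mainTheorem18:
  fixes Lam :: "real set" and G :: "'a monoid" and l :: "'a \<Rightarrow> real"
  assumes "closed Lam" and "convex Lam" and "Lam \<subseteq> {0..}" and "0 \<in> Lam"
    and "group G" and "inv_pseudo_norm Lam G l"
  shows "(metrically_LEF Lam G l \<longleftrightarrow> fmp_exist Lam (model_IPMG Lam) G (norm_pred l))
       \<and> (is_norm_on G l \<longrightarrow>
            (metrically_LEF Lam G l \<longleftrightarrow> fmp_exist Lam (model_IMG Lam) G (norm_pred l)))"
proof (intro conjI impI iffI)
  assume "fmp_exist Lam (model_IMG Lam) G (norm_pred l)"
  then have "fmp_exist Lam (model_IPMG Lam) G (norm_pred l)"
    by (rule fmp_exist_mono) (simp add: model_IMG_def)
  then show "metrically_LEF Lam G l"
    by (rule metrically_LEF_of_fmp_exist[OF assms])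
qed (auto intro: metrically_LEF_of_fmp_exist[OF assms] fmp_exist_IPMG_of_metrically_LEF[OF assms(5,4)]
    fmp_exist_IMG_of_metrically_LEF[OF assms(5,6)])

end
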